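(* Let $p,q,r$ be integers with $1<p<q<r$, $p$ odd and $pq+pr-qr=1$. Then $$\max_{1\le m\le n_p}F_{p,q}(1,m)=F_{p,q}\big(1,\,t_{p,q}+\min\{\alpha_{p,q},1\}\big)=(t_{p,q}+1)(n_p+\alpha_{p,q}).$$
   Context: $n_p=(p-1)/2$; $t_{p,q}$, $\alpha_{p,q}$ are quotient and remainder of $n_p$ divided by $q-p$ ($n_p=t_{p,q}(q-p)+\alpha_{p,q}$, $0\le\alpha_{p,q}<q-p$). $F_{p,q}(x,y)=\frac{1}{4}\left(-(q+r)x^2+4qxy-4(q-p)y^2-4y+q+r\right)$; $m$ ranges over integers. *)

theory Defs
  imports Complex_Main
begin

definition n_p :: "int \<Rightarrow> int" where
  "n_p p = (p - 1) div 2"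

definition t_pq :: "int \<Rightarrow> int \<Rightarrow> int" where
  "t_pq p q = n_p p div (q - p)"

definition alpha_pq :: "int \<Rightarrow> int \<Rightarrow> int" where
  "alpha_pq p q = n_p p mod (q - p)"

definition F_pq :: "int \<Rightarrow> int \<Rightarrow> int \<Rightarrow> int \<Rightarrow> int \<Rightarrow> real" where
  "F_pq p q r x y = (1/4) * (- real_of_int (q + r) * real_of_int x ^ 2
      + 4 * real_of_int q * real_of_int x * real_of_int y
      - 4 * real_of_int (q - p) * real_of_int y ^ 2 - 4 * real_of_int y + real_of_int (q + r))"

end

theory Submission
  imports Defs
begin

text \<open>The form \<open>F_{p,q}(1, m) = m (q - 1 - (q - p) m)\<close> does not involve \<open>r\<close>. Writing \<open>p = 2n + 1\<close> and
  \<open>d = q - p\<close>, it is the concave quadratic \<open>m (2n + d - d m)\<close>, whose real maximum sits at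
  \<open>n/d + 1/2\<close>; on the integers it is therefore maximal at \<open>\<lceil>n/d\<rceil> = t + min \<alpha> 1\<close>, and
  evaluating there gives \<open>(t + 1)(n + \<alpha>)\<close>.\<close>

lemma F_pq_one: "F_pq p q r 1 m = of_int (m * (q - 1 - (q - p) * m))"
  unfolding F_pq_def by (simp add: algebra_simps power2_eq_square)

lemma int_quadratic_le_at_ceiling:
  fixes d n m m0 :: int
  assumes "d > 0" and lower: "d * (m0 - 1) \<le> n" and upper: "n \<le> d * m0"
  shows "m * (2*n + d - d*m) \<le> m0 * (2*n + d - d*m0)"
proof -
  have diff: "m0 * (2*n + d - d*m0) - m * (2*n + d - d*m) = (m0 - m) * (2*n + d - d*(m0 + m))"
    by (simp add: algebra_simps)
  consider "m < m0" | "m = m0" | "m0 < m" by linarith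
  then have "(m0 - m) * (2*n + d - d*(m0 + m)) \<ge> 0"
  proof cases
    case 1
    then have "d * (m0 + m) \<le> d * (2*m0 - 1)" using \<open>d > 0\<close> by simp
    then show ?thesis using 1 lower by (intro mult_nonneg_nonneg) (auto simp: algebra_simps)
  next
    case 2
    then show ?thesis by simp
  next
    case 3
    then have "d * (2*m0 + 1) \<le> d * (m0 + m)" using \<open>d > 0\<close> by simp
    then show ?thesis using 3 upper by (intro mult_nonpos_nonpos) (auto simp: algebra_simps)
  qed
  with diff show ?thesis by linarith
qed

lemma ceiling_quotient_bounds:
  fixes n d t a :: int
  assumes "n = d * t + a" "0 \<le> a" "a < d"
  shows "d * (t + min a 1 - 1) \<le> n" "n \<le> d * (t + min a 1)"
  using assms by (cases "a = 0"; simp add: algebra_simps)+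

lemma ceiling_quotient_range:
  fixes n d t a :: int
  assumes "n = d * t + a" "0 \<le> a" "a < d" "1 \<le> n"
  shows "1 \<le> t + min a 1" "t + min a 1 \<le> n"
proof -
  have "0 < d * (t + min a 1)" using ceiling_quotient_bounds(2)[OF assms(1-3)] assms(4) by linarith
  then have pos: "0 < t + min a 1" using assms(2,3) zero_less_mult_pos by fastforce
  then have "0 \<le> t" by linarith
  then have "t \<le> d * t" using assms(2,3) by (simp add: mult_le_cancel_right1)
  with pos assms(1,2) show "1 \<le> t + min a 1" "t + min a 1 \<le> n" by linarith+
qed

lemma ceiling_quotient_value:
  fixes n d t a :: int
  assumes "n = d * t + a" "0 \<le> a"
  shows "(t + min a 1) * (2*n + d - d * (t + min a 1)) = (t + 1) * (n + a)"
proof (cases "a = 0")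
  case False
  with assms(2) have "min a 1 = 1" by simp
  with assms(1) show ?thesis by (simp add: algebra_simps)
qed (use assms in \<open>simp add: algebra_simps\<close>)

theorem proposition3p5:
  fixes p q r :: int
  assumes "1 < p" "p < q" "q < r" "odd p" "p * q + p * r - q * r = 1"
  shows "Max ((\<lambda>m. F_pq p q r 1 m) ` {1..n_p p})
           = F_pq p q r 1 (t_pq p q + min (alpha_pq p q) 1)
       \<and> F_pq p q r 1 (t_pq p q + min (alpha_pq p q) 1)
           = real_of_int ((t_pq p q + 1) * (n_p p + alpha_pq p q))"
proof -
  define n d t a where "n = n_p p" and "d = q - p" and "t = t_pq p q" and "a = alpha_pq p q"
  define m0 where "m0 = t + min a 1"
  have "d > 0" using \<open>p < q\<close> unfolding d_def by simp
  have "1 \<le> n" using \<open>1 < p\<close> \<open>odd p\<close> unfolding n_def n_p_def by presburger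
  have div_mod: "n = d * t + a" "0 \<le> a" "a < d"
    using \<open>d > 0\<close> unfolding n_def d_def t_def a_def t_pq_def alpha_pq_def by simp_all
  have "q - 1 = 2*n + d" using \<open>odd p\<close> unfolding n_def d_def n_p_def by presburger
  then have F: "F_pq p q r 1 m = of_int (m * (2*n + d - d*m))" for m
    unfolding F_pq_one d_def by simp
  have "Max ((\<lambda>m. F_pq p q r 1 m) ` {1..n}) = F_pq p q r 1 m0"
  proof (rule Max_eqI)
    show "F_pq p q r 1 m0 \<in> (\<lambda>m. F_pq p q r 1 m) ` {1..n}"
      using ceiling_quotient_range[OF div_mod \<open>1 \<le> n\<close>] unfolding m0_def by auto
    fix y
    assume "y \<in> (\<lambda>m. F_pq p q r 1 m) ` {1..n}"
    then obtain m where "y = F_pq p q r 1 m" by blast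
    moreover have "m * (2*n + d - d*m) \<le> m0 * (2*n + d - d*m0)"
      using int_quadratic_le_at_ceiling[OF \<open>d > 0\<close> ceiling_quotient_bounds[OF div_mod]]
      unfolding m0_def .
    ultimately show "y \<le> F_pq p q r 1 m0" unfolding F by (simp only: of_int_le_iff)
  qed simp
  moreover have "F_pq p q r 1 m0 = of_int ((t + 1) * (n + a))"
    unfolding F m0_def ceiling_quotient_value[OF div_mod(1,2)] ..
  ultimately show ?thesis unfolding n_def t_def a_def m0_def by simp
qed

end
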